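(* Let $S\subset\mathbb Z_{\ge1}$. Then $\langle S\rangle_{\mathcal C}$ is the set of all integers of the form $$k+\sum_{j=1}^r(\overline\beta_{b_j}-\overline\beta_{a_j})+s$$ where $r\ge0$, $s\in\mathcal S_\Gamma\cup\{0\}$, $k\in S$, $a_j,b_j\in\{1,\dots,g\}$ and $k\le\overline\beta_{a_1}<\overline\beta_{b_1}\le\overline\beta_{a_2}<\overline\beta_{b_2}\le\cdots\le\overline\beta_{a_r}<\overline\beta_{b_r}$.
   Context: Let $\Gamma$ be a singular irreducible plane branch with multiplicity $n$, Puiseux characteristic exponents $\beta_1<\dots<\beta_g$, $e_0=n$, $e_j=\gcd(e_{j-1},\beta_j)$, $n_j=e_{j-1}/e_j$, $\overline\beta_1=\beta_1$, $\overline\beta_j=n_{j-1}\overline\beta_{j-1}-\beta_{j-1}+\beta_j$ ($2\le j\le g$), and semigroup $\mathcal S_\Gamma$ generated by $n,\overline\beta_1,\dots,\overline\beta_g$. A subset $S\subset\mathbb Z_{>0}$ is a $\mathcal C$-collection if $S+\mathcal S_\Gamma\subset S$ and for all $m\in S$ and $1\le j\le k\le g$ with $m\le\overline\beta_j$, $m+\overline\beta_k-\overline\beta_j\in S$. $\langle S\rangle_{\mathcal C}$ denotes the smallest $\mathcal C$-collection containing $S$. *)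

theory Defs
  imports Main
begin

text \<open>Puiseux data of a singular irreducible plane branch: multiplicity n, genus g,
  characteristic exponents beta 1 < ... < beta g (beta j for 1 \<le> j \<le> g).\<close>

fun ee :: "nat \<Rightarrow> (nat \<Rightarrow> nat) \<Rightarrow> nat \<Rightarrow> nat" where
  "ee n beta 0 = n"
| "ee n beta (Suc j) = gcd (ee n beta j) (beta (Suc j))"

definition nn :: "nat \<Rightarrow> (nat \<Rightarrow> nat) \<Rightarrow> nat \<Rightarrow> nat" where
  "nn n beta j = ee n beta (j - 1) div ee n beta j"

fun betabar :: "nat \<Rightarrow> (nat \<Rightarrow> nat) \<Rightarrow> nat \<Rightarrow> int" where
  "betabar n beta 0 = 0"
| "betabar n beta (Suc 0) = int (beta 1)"
| "betabar n beta (Suc (Suc j)) =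
     int (nn n beta (Suc j)) * betabar n beta (Suc j) - int (beta (Suc j)) + int (beta (Suc (Suc j)))"

definition is_branch_char :: "nat \<Rightarrow> nat \<Rightarrow> (nat \<Rightarrow> nat) \<Rightarrow> bool" where
  "is_branch_char n g beta \<longleftrightarrow>
     2 \<le> n \<and> 1 \<le> g \<and> n < beta 1 \<and>
     (\<forall>j. 1 \<le> j \<and> j < g \<longrightarrow> beta j < beta (Suc j)) \<and>
     (\<forall>j. 1 \<le> j \<and> j \<le> g \<longrightarrow> ee n beta j < ee n beta (j - 1)) \<and>
     ee n beta g = 1"

definition semigrp :: "nat \<Rightarrow> nat \<Rightarrow> (nat \<Rightarrow> nat) \<Rightarrow> int set" where
  "semigrp n g beta = {x. \<exists>c0 (c :: nat \<Rightarrow> nat).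
      x = int c0 * int n + (\<Sum>j = 1..g. int (c j) * betabar n beta j)}"

definition C_collection :: "nat \<Rightarrow> nat \<Rightarrow> (nat \<Rightarrow> nat) \<Rightarrow> int set \<Rightarrow> bool" where
  "C_collection n g beta T \<longleftrightarrow>
     T \<subseteq> {0<..} \<and>
     (\<forall>m \<in> T. \<forall>s \<in> semigrp n g beta. m + s \<in> T) \<and>
     (\<forall>m \<in> T. \<forall>j k. 1 \<le> j \<and> j \<le> k \<and> k \<le> g \<and> m \<le> betabar n beta j \<longrightarrow>
          m + betabar n beta k - betabar n beta j \<in> T)"

definition C_hull :: "nat \<Rightarrow> nat \<Rightarrow> (nat \<Rightarrow> nat) \<Rightarrow> int set \<Rightarrow> int set" where
  "C_hull n g beta S = \<Inter> {T. C_collection n g beta T \<and> S \<subseteq> T}"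

end

theory Submission
  imports Defs
begin

text \<open>Since \<open>n\<^sub>j \<ge> 2\<close>, the generators are superincreasing: \<open>2 \<beta>\<^sub>j < \<beta>\<^sub>j\<^sub>+\<^sub>1\<close>.
  Consequently, if \<open>\<beta>\<^sub>a < \<beta>\<^sub>b\<close> then every \<open>\<beta>\<^sub>j < \<beta>\<^sub>b\<close> is smaller than the jump
  \<open>\<beta>\<^sub>b - \<beta>\<^sub>a\<close>. So when the C-operation \<open>m \<mapsto> m + \<beta>\<^sub>k - \<beta>\<^sub>j\<close> (with \<open>m \<le> \<beta>\<^sub>j\<close>) is applied
  to a chain value \<open>m\<close>, the last jump of the chain must end at or below \<open>\<beta>\<^sub>j\<close>, and appending
  the new jump gives another chain: the chain values form a C-collection. Conversely, a chain
  value is reached from \<open>k \<in> S\<close> by performing its jumps one at a time; each step is admissible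
  because the partial sum so far is bounded by the end of the previous jump, hence by the
  start of the next one.\<close>

lemma ee_pos: "1 \<le> n \<Longrightarrow> ee n beta j > 0"
  by (induction j) auto

lemma betabar_Suc:
  "1 \<le> i \<Longrightarrow> betabar n beta (Suc i) =
     int (nn n beta i) * betabar n beta i - int (beta i) + int (beta (Suc i))"
  by (cases i) auto

lemma zero_in_semigrp: "0 \<in> semigrp n g beta"
  unfolding semigrp_def by (rule CollectI, rule exI[of _ 0], rule exI[of _ "\<lambda>_. 0"]) simp

lemma semigrp_add:
  assumes "s \<in> semigrp n g beta" "t \<in> semigrp n g beta"
  shows "s + t \<in> semigrp n g beta"
proof -
  obtain c0 c where s: "s = int c0 * int n + (\<Sum>j = 1..g. int (c j) * betabar n beta j)"
    using assms(1) unfolding semigrp_def by auto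
  obtain d0 d where t: "t = int d0 * int n + (\<Sum>j = 1..g. int (d j) * betabar n beta j)"
    using assms(2) unfolding semigrp_def by auto
  have "s + t = int (c0 + d0) * int n + (\<Sum>j = 1..g. int (c j + d j) * betabar n beta j)"
    unfolding s t by (simp add: sum.distrib algebra_simps)
  then show ?thesis unfolding semigrp_def by (intro CollectI exI)
qed

locale plane_branch =
  fixes n g :: nat and beta :: "nat \<Rightarrow> nat"
  assumes branch_char: "is_branch_char n g beta"
begin

abbreviation B :: "nat \<Rightarrow> int" where
  "B \<equiv> betabar n beta"

lemma nn_ge_2:
  assumes "1 \<le> i" "i \<le> g"
  shows "nn n beta i \<ge> 2"
proof -
  obtain j where i: "i = Suc j" using assms(1) by (cases i) auto
  have pos: "ee n beta i > 0"
    using branch_char ee_pos unfolding is_branch_char_def by auto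
  have lt: "ee n beta i < ee n beta j"
    using branch_char assms unfolding is_branch_char_def i by auto
  have "ee n beta i dvd ee n beta j" unfolding i by simp
  then obtain q where q: "ee n beta j = ee n beta i * q" by (auto simp: dvd_def)
  have "q \<noteq> 0" "q \<noteq> 1" using q pos lt by auto
  moreover have "nn n beta i = ee n beta j div ee n beta i" unfolding nn_def i by simp
  then have "nn n beta i = q" using q pos by simp
  ultimately show ?thesis by simp
qed

lemma betabar_pos_and_doubling:
  "1 \<le> i \<Longrightarrow> i \<le> g \<Longrightarrow> B i \<ge> 1 \<and> (i < g \<longrightarrow> 2 * B i < B (Suc i))"
proof (induction i)
  case 0
  then show ?case by simp
next
  case (Suc i)
  have pos: "B (Suc i) \<ge> 1"
  proof (cases "i = 0")
    case True
    then show ?thesis using branch_char unfolding is_branch_char_def by auto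
  next
    case False
    then show ?thesis using Suc by fastforce
  qed
  have "2 * B (Suc i) < B (Suc (Suc i))" if "Suc i < g"
  proof -
    have "int (nn n beta (Suc i)) \<ge> 2" using nn_ge_2[of "Suc i"] that by simp
    then have "int (nn n beta (Suc i)) * B (Suc i) \<ge> 2 * B (Suc i)"
      using pos mult_right_mono by fastforce
    moreover have "beta (Suc i) < beta (Suc (Suc i))"
      using branch_char that unfolding is_branch_char_def by auto
    ultimately show ?thesis using betabar_Suc[of "Suc i" n beta] by simp
  qed
  with pos show ?case by blast
qed

lemma betabar_pos: "1 \<le> i \<Longrightarrow> i \<le> g \<Longrightarrow> B i \<ge> 1"
  using betabar_pos_and_doubling by blast

lemma betabar_mono:
  assumes "1 \<le> a" "a \<le> b" "b \<le> g"
  shows "B a \<le> B b"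
  using assms(2,3)
proof (induction b rule: dec_induct)
  case base
  then show ?case by simp
next
  case (step m)
  then show ?case using betabar_pos_and_doubling[of m] assms(1) by auto
qed

lemma betabar_add_lt:
  assumes "1 \<le> a" "a < b" "b \<le> g" "1 \<le> c" "c < b"
  shows "B a + B c < B b"
proof -
  obtain p where b: "b = Suc p" using assms by (cases b) auto
  have "B a \<le> B p" "B c \<le> B p" using betabar_mono assms b by auto
  moreover have "2 * B p < B b" using betabar_pos_and_doubling[of p] assms b by auto
  ultimately show ?thesis by linarith
qed

lemma betabar_strict_mono:
  assumes "1 \<le> a" "a < b" "b \<le> g"
  shows "B a < B b"
  using betabar_add_lt[OF assms assms(1,2)] betabar_pos[of a] assms by auto

lemma betabar_less_imp_less:
  assumes "a \<in> {1..g}" "b \<in> {1..g}" "B a < B b"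
  shows "a < b"
  using betabar_mono[of b a] assms by force

lemma betabar_lt_jump:
  assumes "a \<in> {1..g}" "b \<in> {1..g}" "j \<in> {1..g}" "B a < B b" "B j < B b"
  shows "B j < B b - B a"
  using betabar_add_lt[of a b j] betabar_less_imp_less assms by fastforce

lemma semigrp_nonneg:
  assumes "s \<in> semigrp n g beta"
  shows "s \<ge> 0"
proof -
  obtain c0 c where s: "s = int c0 * int n + (\<Sum>j = 1..g. int (c j) * B j)"
    using assms unfolding semigrp_def by auto
  have "(\<Sum>j = 1..g. int (c j) * B j) \<ge> 0"
    using betabar_pos by (force intro!: sum_nonneg)
  then show ?thesis using s by simp
qed

definition jump_chain :: "int \<Rightarrow> nat \<Rightarrow> (nat \<Rightarrow> nat) \<Rightarrow> (nat \<Rightarrow> nat) \<Rightarrow> bool" where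
  "jump_chain k r a b \<longleftrightarrow>
     (\<forall>i \<in> {1..r}. a i \<in> {1..g} \<and> b i \<in> {1..g}) \<and>
     (1 \<le> r \<longrightarrow> k \<le> B (a 1)) \<and>
     (\<forall>i \<in> {1..r}. B (a i) < B (b i)) \<and>
     (\<forall>i. 1 \<le> i \<and> i < r \<longrightarrow> B (b i) \<le> B (a (Suc i)))"

definition jump_sum :: "nat \<Rightarrow> (nat \<Rightarrow> nat) \<Rightarrow> (nat \<Rightarrow> nat) \<Rightarrow> int" where
  "jump_sum r a b = (\<Sum>i = 1..r. B (b i) - B (a i))"

definition chain_values :: "int set \<Rightarrow> int set" where
  "chain_values S = {x. \<exists>r a b k s. k \<in> S \<and> s \<in> semigrp n g beta \<and>
     jump_chain k r a b \<and> x = k + jump_sum r a b + s}"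

lemma jump_sum_0 [simp]: "jump_sum 0 a b = 0"
  by (simp add: jump_sum_def)

lemma jump_sum_Suc: "jump_sum (Suc r) a b = jump_sum r a b + (B (b (Suc r)) - B (a (Suc r)))"
  by (simp add: jump_sum_def sum.cl_ivl_Suc)

lemma jump_chain_prefix: "jump_chain k r a b \<Longrightarrow> t \<le> r \<Longrightarrow> jump_chain k t a b"
  unfolding jump_chain_def by auto

lemma jump_sum_nonneg: "jump_chain k r a b \<Longrightarrow> jump_sum r a b \<ge> 0"
  unfolding jump_chain_def jump_sum_def by (force intro!: sum_nonneg)

lemma last_jump_le_jump_sum:
  assumes "jump_chain k (Suc r) a b"
  shows "B (b (Suc r)) - B (a (Suc r)) \<le> jump_sum (Suc r) a b"
  using jump_sum_nonneg[OF jump_chain_prefix[OF assms]] by (simp add: jump_sum_Suc)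

lemma chain_value_le_next_start:
  assumes "jump_chain k (Suc r) a b"
  shows "k + jump_sum r a b \<le> B (a (Suc r))"
  using assms
proof (induction r)
  case 0
  then show ?case by (simp add: jump_chain_def)
next
  case (Suc r)
  have "k + jump_sum r a b \<le> B (a (Suc r))"
    using Suc jump_chain_prefix[of k "Suc (Suc r)" a b "Suc r"] by simp
  then have "k + jump_sum (Suc r) a b \<le> B (b (Suc r))" by (simp add: jump_sum_Suc)
  also have "\<dots> \<le> B (a (Suc (Suc r)))" using Suc.prems by (simp add: jump_chain_def)
  finally show ?case .
qed

lemma jump_chain_snoc:
  assumes chain: "jump_chain k r a b"
    and j: "1 \<le> j" "j < j'" "j' \<le> g"
    and start: "r = 0 \<Longrightarrow> k \<le> B j"
    and last: "1 \<le> r \<Longrightarrow> B (b r) \<le> B j"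
  shows "jump_chain k (Suc r) (a(Suc r := j)) (b(Suc r := j'))"
    and "jump_sum (Suc r) (a(Suc r := j)) (b(Suc r := j')) = jump_sum r a b + (B j' - B j)"
proof -
  have "B j < B j'" using betabar_strict_mono j by blast
  then show "jump_chain k (Suc r) (a(Suc r := j)) (b(Suc r := j'))"
    using chain j start last unfolding jump_chain_def by (auto simp: less_Suc_eq)
  have "jump_sum r (a(Suc r := j)) (b(Suc r := j')) = jump_sum r a b"
    unfolding jump_sum_def by (rule sum.cong) auto
  then show "jump_sum (Suc r) (a(Suc r := j)) (b(Suc r := j')) = jump_sum r a b + (B j' - B j)"
    by (simp add: jump_sum_Suc)
qed

lemma last_jump_end_le:
  assumes chain: "jump_chain k (Suc r) a b" and "k \<ge> 1" "s \<ge> 0"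
    and j: "j \<in> {1..g}" and m: "k + jump_sum (Suc r) a b + s \<le> B j"
  shows "B (b (Suc r)) \<le> B j"
proof (rule ccontr)
  assume "\<not> ?thesis"
  moreover have "a (Suc r) \<in> {1..g}" "b (Suc r) \<in> {1..g}" "B (a (Suc r)) < B (b (Suc r))"
    using chain by (auto simp: jump_chain_def)
  ultimately have "B j < B (b (Suc r)) - B (a (Suc r))"
    using betabar_lt_jump j by simp
  then show False
    using last_jump_le_jump_sum[OF chain] \<open>k \<ge> 1\<close> \<open>s \<ge> 0\<close> m by linarith
qed

lemma chain_values_pos:
  assumes "S \<subseteq> {1..}"
  shows "chain_values S \<subseteq> {0<..}"
proof
  fix x assume "x \<in> chain_values S"
  then obtain r a b k s where "k \<in> S" "s \<in> semigrp n g beta" "jump_chain k r a b"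
      and x: "x = k + jump_sum r a b + s"
    unfolding chain_values_def by blast
  then show "x \<in> {0<..}"
    using assms jump_sum_nonneg semigrp_nonneg by fastforce
qed

lemma chain_values_add_semigrp:
  assumes "x \<in> chain_values S" "t \<in> semigrp n g beta"
  shows "x + t \<in> chain_values S"
proof -
  obtain r a b k s where "k \<in> S" "s \<in> semigrp n g beta" "jump_chain k r a b"
      and x: "x = k + jump_sum r a b + s"
    using assms(1) unfolding chain_values_def by blast
  moreover have "x + t = k + jump_sum r a b + (s + t)" using x by simp
  ultimately show ?thesis
    using semigrp_add[OF _ assms(2)] unfolding chain_values_def by blast
qed

lemma chain_values_jump:
  assumes S: "S \<subseteq> {1..}" and m: "m \<in> chain_values S"
    and j: "1 \<le> j" "j \<le> j'" "j' \<le> g" "m \<le> B j"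
  shows "m + B j' - B j \<in> chain_values S"
proof (cases "j = j'")
  case True
  then show ?thesis using m by simp
next
  case False
  obtain r a b k s where k: "k \<in> S" and s: "s \<in> semigrp n g beta"
      and chain: "jump_chain k r a b" and m_eq: "m = k + jump_sum r a b + s"
    using m unfolding chain_values_def by blast
  have "k \<ge> 1" "s \<ge> 0" using k S semigrp_nonneg[OF s] by auto
  have start: "k \<le> B j" if "r = 0"
    using that m_eq \<open>s \<ge> 0\<close> j by simp
  have last: "B (b r) \<le> B j" if r: "1 \<le> r"
  proof -
    obtain p where "r = Suc p" using r by (cases r) auto
    then show ?thesis
      using last_jump_end_le chain \<open>k \<ge> 1\<close> \<open>s \<ge> 0\<close> j m_eq by simp
  qed
  have "j < j'" using False j by simp
  note snoc = jump_chain_snoc[OF chain \<open>1 \<le> j\<close> this \<open>j' \<le> g\<close> start last]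
  have "m + B j' - B j = k + jump_sum (Suc r) (a(Suc r := j)) (b(Suc r := j')) + s"
    using m_eq snoc(2) by simp
  then show ?thesis using k s snoc(1) unfolding chain_values_def by blast
qed

lemma C_collection_chain_values:
  assumes "S \<subseteq> {1..}"
  shows "C_collection n g beta (chain_values S)"
  unfolding C_collection_def
  using chain_values_pos[OF assms] chain_values_add_semigrp chain_values_jump[OF assms] by simp

lemma subset_chain_values: "S \<subseteq> chain_values S"
proof
  fix k assume "k \<in> S"
  moreover have "jump_chain k 0 a b" for a b by (simp add: jump_chain_def)
  ultimately show "k \<in> chain_values S"
    unfolding chain_values_def using zero_in_semigrp by fastforce
qed

lemma chain_value_mem_C_collection:
  assumes T: "C_collection n g beta T" and "k \<in> T" and "jump_chain k r a b"
  shows "k + jump_sum r a b \<in> T"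
  using assms(3)
proof (induction r)
  case 0
  then show ?case using \<open>k \<in> T\<close> by simp
next
  case (Suc r)
  have "k + jump_sum r a b \<in> T" using Suc jump_chain_prefix[of k "Suc r" a b r] by simp
  moreover have "k + jump_sum r a b \<le> B (a (Suc r))"
    using chain_value_le_next_start[OF Suc.prems] .
  moreover have ab: "a (Suc r) \<in> {1..g}" "b (Suc r) \<in> {1..g}" "B (a (Suc r)) < B (b (Suc r))"
    using Suc.prems by (auto simp: jump_chain_def)
  moreover have "a (Suc r) \<le> b (Suc r)" using betabar_less_imp_less[OF ab] by simp
  ultimately have "k + jump_sum r a b + B (b (Suc r)) - B (a (Suc r)) \<in> T"
    using T unfolding C_collection_def by auto
  then show ?case by (simp add: jump_sum_Suc algebra_simps)
qed

lemma chain_values_subset_C_collection: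
  assumes T: "C_collection n g beta T" and "S \<subseteq> T"
  shows "chain_values S \<subseteq> T"
proof
  fix x assume "x \<in> chain_values S"
  then obtain r a b k s where "k \<in> S" "s \<in> semigrp n g beta" "jump_chain k r a b"
      and x: "x = k + jump_sum r a b + s"
    unfolding chain_values_def by blast
  then have "k + jump_sum r a b \<in> T"
    using chain_value_mem_C_collection[OF T] assms(2) by blast
  then show "x \<in> T"
    using T \<open>s \<in> semigrp n g beta\<close> x unfolding C_collection_def by blast
qed

lemma C_hull_eq_chain_values:
  assumes "S \<subseteq> {1..}"
  shows "C_hull n g beta S = chain_values S"
  unfolding C_hull_def
proof (rule antisym)
  show "\<Inter> {T. C_collection n g beta T \<and> S \<subseteq> T} \<subseteq> chain_values S"
    using C_collection_chain_values[OF assms] subset_chain_values by (intro Inter_lower) blast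
  show "chain_values S \<subseteq> \<Inter> {T. C_collection n g beta T \<and> S \<subseteq> T}"
    using chain_values_subset_C_collection by (intro Inter_greatest) blast
qed

end

theorem mainTheorem6:
  fixes n g :: nat and beta :: "nat \<Rightarrow> nat" and S :: "int set"
  assumes "is_branch_char n g beta"
    and "S \<subseteq> {1..}"
  shows "C_hull n g beta S =
    {x. \<exists>(r::nat) (a::nat \<Rightarrow> nat) (b::nat \<Rightarrow> nat) k s.
          k \<in> S \<and> s \<in> semigrp n g beta \<and>
          (\<forall>i \<in> {1..r}. a i \<in> {1..g} \<and> b i \<in> {1..g}) \<and>
          (1 \<le> r \<longrightarrow> k \<le> betabar n beta (a 1)) \<and>
          (\<forall>i \<in> {1..r}. betabar n beta (a i) < betabar n beta (b i)) \<and>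
          (\<forall>i. 1 \<le> i \<and> i < r \<longrightarrow> betabar n beta (b i) \<le> betabar n beta (a (Suc i))) \<and>
          x = k + (\<Sum>i = 1..r. betabar n beta (b i) - betabar n beta (a i)) + s}"
proof -
  interpret plane_branch n g beta by (rule plane_branch.intro) (fact assms(1))
  show ?thesis
    unfolding C_hull_eq_chain_values[OF assms(2)] chain_values_def jump_chain_def jump_sum_def
    by (simp only: conj_assoc)
qed

end
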